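(* Let $f,g$ be holomorphic functions on a neighbourhood of $0$ in $\mathbb{C}^n$ vanishing at $0$, and let $\varepsilon>0$ be sufficiently small. The critical points of the map $$\phi=\frac{f/g}{|f/g|}:\mathbb{S}^{2n-1}_\varepsilon\setminus(L_f\cup L_g)\to\mathbb{S}^1$$ are exactly the points $z=(z_1,\dots,z_n)$ at which the vector $i\,\mathrm{grad}\,\log(f/g)(z)$ is a real multiple of $z$.
   Context: $\mathbb{S}^{2n-1}_\varepsilon$ is the sphere of radius $\varepsilon$ about $0$ in $\mathbb{C}^n$, $L_f=f^{-1}(0)\cap\mathbb{S}^{2n-1}_\varepsilon$ and $L_g=g^{-1}(0)\cap\mathbb{S}^{2n-1}_\varepsilon$. For a (meromorphic) function $h$, $\mathrm{grad}\,h=\big(\overline{\partial h/\partial z_1},\dots,\overline{\partial h/\partial z_n}\big)$; thus $\mathrm{grad}\,\log(f/g)$ has $j$-th component $\overline{(\partial f/\partial z_j)/f-(\partial g/\partial z_j)/g}$, defined off $(fg)^{-1}(0)$. *)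

theory Defs
  imports "HOL-Analysis.Analysis"
begin

definition cn_holomorphic_on :: "(complex^'n \<Rightarrow> complex) \<Rightarrow> (complex^'n) set \<Rightarrow> bool" where
  "cn_holomorphic_on f U \<longleftrightarrow>
     (\<forall>z\<in>U. \<exists>D. (f has_derivative D) (at z) \<and> (\<forall>c v. D (c *s v) = c * D v))"

definition cpartial :: "'n \<Rightarrow> (complex^'n \<Rightarrow> complex) \<Rightarrow> complex^'n \<Rightarrow> complex" where
  "cpartial j f z = deriv (\<lambda>t. f (\<chi> k. if k = j then t else z $ k)) (z $ j)"

definition grad_log_quot :: "(complex^'n \<Rightarrow> complex) \<Rightarrow> (complex^'n \<Rightarrow> complex) \<Rightarrow> complex^'n \<Rightarrow> complex^'n" where
  "grad_log_quot f g z = (\<chi> j. cnj (cpartial j f z / f z - cpartial j g z / g z))"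

text \<open>z (on the sphere |z| = eps) is a critical point of the restriction to the sphere of a
  map phi into the unit circle: the differential of phi restricted to the tangent space
  {v. z \<bullet> v = 0} of the sphere at z does not surject onto the tangent line of S^1 at phi z.\<close>
definition sphere_critical_point :: "(complex^'n \<Rightarrow> complex) \<Rightarrow> complex^'n \<Rightarrow> bool" where
  "sphere_critical_point \<phi> z \<longleftrightarrow>
     (\<exists>D. (\<phi> has_derivative D) (at z) \<and>
          \<not> ({\<i> * complex_of_real t * \<phi> z | t. True} \<subseteq> D ` {v. inner z v = 0}))"

end

theory Submission
  imports Defs
begin

text \<open>Off the zeros of f and g the map \<phi> = (f/g)/|f/g| is exp(\<i> arg(f/g)), so its
  differential at z is v \<mapsto> \<i> \<phi>(z) Im(d log(f/g)(z) v), and by complex linearity of the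
  differentials Im(d log(f/g)(z) v) is the real inner product of \<i> grad log(f/g)(z) with v.
  Hence this differential fails to map the tangent space of the sphere at z (the real orthogonal
  complement of z) onto the tangent line of the circle exactly when \<i> grad log(f/g)(z) is
  orthogonal to that complement, i.e. a real multiple of z. The radius only has to be small
  enough for the sphere to lie in the domain of f and g; that f and g vanish at 0 plays no role.\<close>

lemma bounded_linear_axis: "bounded_linear (axis j :: 'a::euclidean_space \<Rightarrow> 'a^'n)"
  unfolding linear_conv_bounded_linear[symmetric]
  by (rule linearI) (simp_all add: vec_eq_iff axis_def)

lemma scaleR_eq_of_real_vector_scalar_mult: "(r *\<^sub>R z :: complex^'n) = complex_of_real r *s z"
  by (simp add: vec_eq_iff flip: scaleR_conv_of_real)

lemma complex_linear_eq_sum_axis: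
  fixes D :: "complex^'n \<Rightarrow> complex"
  assumes "linear D" and "\<forall>c v. D (c *s v) = c * D v"
  shows "D v = (\<Sum>j\<in>UNIV. v$j * D (axis j 1))"
proof -
  have "D v = D (\<Sum>j\<in>UNIV. (v$j) *s axis j 1)" by (simp add: basis_expansion)
  also have "\<dots> = (\<Sum>j\<in>UNIV. v$j * D (axis j 1))"
    using assms by (simp add: linear_sum)
  finally show ?thesis .
qed

lemma cpartial_eq_derivative_axis:
  fixes f :: "complex^'n \<Rightarrow> complex"
  assumes f': "(f has_derivative D) (at z)" and D_complex: "\<forall>c v. D (c *s v) = c * D v"
  shows "cpartial j f z = D (axis j 1)"
proof -
  have line: "(\<chi> k. if k = j then t else z $ k) = z + axis j (t - z$j)" for t
    by (auto simp: vec_eq_iff axis_def)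
  have z_eq: "z + axis j (z$j - z$j) = z"
    by (simp add: vec_eq_iff axis_def)
  have "((\<lambda>t. axis j (t - z$j) :: complex^'n) has_derivative (\<lambda>s. axis j (s - 0))) (at (z$j))"
    by (intro bounded_linear.has_derivative[OF bounded_linear_axis] derivative_intros)
  then have "((\<lambda>t. z + axis j (t - z$j)) has_derivative axis j) (at (z$j))"
    by (auto intro: has_derivative_add_const[where c=z, simplified add.commute])
  moreover have "(f has_derivative D) (at (z + axis j (z$j - z$j)))"
    unfolding z_eq by (rule f')
  ultimately have "((\<lambda>t. f (z + axis j (t - z$j))) has_derivative (\<lambda>s. D (axis j s))) (at (z$j))"
    by (rule has_derivative_compose)
  moreover have "(\<lambda>s. D (axis j s)) = (\<lambda>s. D (axis j 1) * s)"
  proof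
    fix s :: complex
    have "axis j s = s *s axis j 1"
      by (simp add: vec_eq_iff axis_def)
    then show "D (axis j s) = D (axis j 1) * s"
      using D_complex by (simp add: mult.commute)
  qed
  ultimately have "((\<lambda>t. f (z + axis j (t - z$j))) has_field_derivative D (axis j 1)) (at (z$j))"
    by (simp add: has_field_derivative_def)
  then show ?thesis unfolding cpartial_def line by (rule DERIV_imp_deriv)
qed

lemma Im_sum_mult_eq_inner_cnj:
  fixes a :: "'n::finite \<Rightarrow> complex" and v :: "complex^'n"
  shows "Im (\<Sum>j\<in>UNIV. v$j * a j) = inner (\<i> *s (\<chi> j. cnj (a j))) v"
  by (simp add: inner_vec_def Im_sum inner_complex_def algebra_simps)

lemma Im_log_derivative_quotient_eq_inner:
  fixes f g :: "complex^'n \<Rightarrow> complex"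
  assumes f': "(f has_derivative Df) (at z)" and Df_complex: "\<forall>c v. Df (c *s v) = c * Df v"
    and g': "(g has_derivative Dg) (at z)" and Dg_complex: "\<forall>c v. Dg (c *s v) = c * Dg v"
  shows "Im (Df v / f z - Dg v / g z) = inner (\<i> *s grad_log_quot f g z) v"
proof -
  have "Df v = (\<Sum>j\<in>UNIV. v$j * cpartial j f z)"
    unfolding cpartial_eq_derivative_axis[OF f' Df_complex]
    by (rule complex_linear_eq_sum_axis[OF has_derivative_linear[OF f'] Df_complex])
  moreover have "Dg v = (\<Sum>j\<in>UNIV. v$j * cpartial j g z)"
    unfolding cpartial_eq_derivative_axis[OF g' Dg_complex]
    by (rule complex_linear_eq_sum_axis[OF has_derivative_linear[OF g'] Dg_complex])
  ultimately have "Df v / f z - Dg v / g z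
      = (\<Sum>j\<in>UNIV. v$j * (cpartial j f z / f z - cpartial j g z / g z))"
    by (simp add: sum_divide_distrib sum_subtractf[symmetric] algebra_simps)
  then show ?thesis
    unfolding grad_log_quot_def Im_sum_mult_eq_inner_cnj[symmetric] by simp
qed

lemma inner_mult_sgn:
  fixes h q :: complex
  assumes "h \<noteq> 0"
  shows "inner (h * q) (sgn h) = cmod h * Re q"
proof -
  have "inner (h * q) (sgn h) = inner (h * q) h / cmod h"
    by (simp add: sgn_div_norm inner_scaleR_right divide_inverse_commute)
  also have "inner (h * q) h = Re q * (cmod h)^2"
    unfolding cmod_power2 by (simp add: inner_complex_def algebra_simps power2_eq_square)
  finally show ?thesis using assms by (simp add: power2_eq_square)
qed

lemma has_derivative_normalize:
  fixes h :: "'a::real_normed_vector \<Rightarrow> complex"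
  assumes h': "(h has_derivative Dh) (at z)" and nz: "h z \<noteq> 0"
  shows "((\<lambda>w. h w / complex_of_real (cmod (h w))) has_derivative
           (\<lambda>v. (h z / complex_of_real (cmod (h z))) * (\<i> * complex_of_real (Im (Dh v / h z))))) (at z)"
proof -
  have norm': "((\<lambda>w. complex_of_real (cmod (h w))) has_derivative
          (\<lambda>v. complex_of_real (inner (Dh v) (sgn (h z))))) (at z)"
    using has_derivative_of_real[OF has_derivative_compose[OF h' has_derivative_norm[OF nz]]] .
  have "(Dh v * complex_of_real (cmod (h z)) - h z * complex_of_real (inner (Dh v) (sgn (h z))))
            / (complex_of_real (cmod (h z)) * complex_of_real (cmod (h z)))
        = (h z / complex_of_real (cmod (h z))) * (\<i> * complex_of_real (Im (Dh v / h z)))" for v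
  proof -
    define q where "q = Dh v / h z"
    have Dh_eq: "Dh v = h z * q" using nz by (simp add: q_def)
    have "(Dh v * complex_of_real (cmod (h z)) - h z * complex_of_real (inner (Dh v) (sgn (h z))))
            / (complex_of_real (cmod (h z)) * complex_of_real (cmod (h z)))
          = (h z / complex_of_real (cmod (h z))) * (q - complex_of_real (Re q))"
      unfolding Dh_eq inner_mult_sgn[OF nz] using nz by (simp add: field_simps)
    also have "q - complex_of_real (Re q) = \<i> * complex_of_real (Im q)"
      by (simp add: complex_eq_iff)
    finally show ?thesis unfolding q_def .
  qed
  then show ?thesis
    using has_derivative_divide'[OF h' norm'] nz by simp
qed

lemma orthogonal_perp_iff_scaleR:
  fixes z w :: "'a::real_inner"
  assumes "z \<noteq> 0"
  shows "(\<forall>v. inner z v = 0 \<longrightarrow> inner w v = 0) \<longleftrightarrow> (\<exists>r. w = r *\<^sub>R z)"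
proof
  assume perp: "\<forall>v. inner z v = 0 \<longrightarrow> inner w v = 0"
  define r where "r = inner w z / inner z z"
  have "inner z (w - r *\<^sub>R z) = 0"
    using assms by (simp add: r_def inner_diff_right inner_commute)
  with perp have "inner (w - r *\<^sub>R z) (w - r *\<^sub>R z) = 0"
    by (simp add: inner_diff_left)
  then show "\<exists>r. w = r *\<^sub>R z" by auto
qed auto

lemma sphere_critical_point_iff:
  fixes \<phi> :: "complex^'n \<Rightarrow> complex"
  assumes \<phi>': "(\<phi> has_derivative (\<lambda>v. \<phi> z * (\<i> * complex_of_real (L v)))) (at z)"
    and nz: "\<phi> z \<noteq> 0"
  shows "sphere_critical_point \<phi> z \<longleftrightarrow> (\<forall>v. inner z v = 0 \<longrightarrow> L v = 0)"
proof -
  let ?D = "\<lambda>v. \<phi> z * (\<i> * complex_of_real (L v))"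
  have L_scaleR: "L (r *\<^sub>R v) = r * L v" for r v
  proof -
    have "?D (r *\<^sub>R v) = r *\<^sub>R ?D v"
      using linear_scale[OF has_derivative_linear[OF \<phi>']] .
    then show ?thesis
      using nz by (simp add: scaleR_conv_of_real flip: of_real_mult)
  qed
  have "sphere_critical_point \<phi> z \<longleftrightarrow>
      \<not> {\<i> * complex_of_real t * \<phi> z | t. True} \<subseteq> ?D ` {v. inner z v = 0}"
    unfolding sphere_critical_point_def using \<phi>' has_derivative_unique by blast
  also have "\<dots> \<longleftrightarrow> (\<forall>v. inner z v = 0 \<longrightarrow> L v = 0)"
  proof
    assume "\<not> {\<i> * complex_of_real t * \<phi> z | t. True} \<subseteq> ?D ` {v. inner z v = 0}"
    then obtain t where t: "\<i> * complex_of_real t * \<phi> z \<notin> ?D ` {v. inner z v = 0}"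
      by auto
    show "\<forall>v. inner z v = 0 \<longrightarrow> L v = 0"
    proof (intro allI impI, rule ccontr)
      fix v assume "inner z v = 0" "L v \<noteq> 0"
      then have "(t / L v) *\<^sub>R v \<in> {v. inner z v = 0}"
        and "\<i> * complex_of_real t * \<phi> z = ?D ((t / L v) *\<^sub>R v)"
        by (simp_all add: L_scaleR)
      then have "\<i> * complex_of_real t * \<phi> z \<in> ?D ` {v. inner z v = 0}"
        by (rule rev_image_eqI)
      with t show False ..
    qed
  next
    assume "\<forall>v. inner z v = 0 \<longrightarrow> L v = 0"
    then have "\<i> * complex_of_real 1 * \<phi> z \<notin> ?D ` {v. inner z v = 0}"
      using nz by auto
    then show "\<not> {\<i> * complex_of_real t * \<phi> z | t. True} \<subseteq> ?D ` {v. inner z v = 0}"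
      by blast
  qed
  finally show ?thesis .
qed

lemma sphere_critical_point_sgn_quotient_iff:
  fixes f g :: "complex^'n \<Rightarrow> complex"
  assumes f': "(f has_derivative Df) (at z)" and Df_complex: "\<forall>c v. Df (c *s v) = c * Df v"
    and g': "(g has_derivative Dg) (at z)" and Dg_complex: "\<forall>c v. Dg (c *s v) = c * Dg v"
    and "f z \<noteq> 0" and "g z \<noteq> 0" and "z \<noteq> 0"
  shows "sphere_critical_point (\<lambda>w. (f w / g w) / complex_of_real (cmod (f w / g w))) z
    \<longleftrightarrow> (\<exists>r::real. \<i> *s grad_log_quot f g z = complex_of_real r *s z)"
proof -
  let ?h = "\<lambda>w. f w / g w"
  let ?Dh = "\<lambda>v. (Df v * g z - f z * Dg v) / (g z * g z)"
  have "(?h has_derivative ?Dh) (at z)"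
    using has_derivative_divide'[OF f' g' \<open>g z \<noteq> 0\<close>] .
  moreover have "Im (?Dh v / ?h z) = inner (\<i> *s grad_log_quot f g z) v" for v
  proof -
    have "?Dh v / ?h z = Df v / f z - Dg v / g z"
      using \<open>f z \<noteq> 0\<close> \<open>g z \<noteq> 0\<close> by (simp add: field_simps)
    then show ?thesis
      by (simp only: Im_log_derivative_quotient_eq_inner[OF f' Df_complex g' Dg_complex])
  qed
  ultimately have "((\<lambda>w. ?h w / complex_of_real (cmod (?h w))) has_derivative
      (\<lambda>v. (?h z / complex_of_real (cmod (?h z)))
             * (\<i> * complex_of_real (inner (\<i> *s grad_log_quot f g z) v)))) (at z)"
    using has_derivative_normalize[of ?h ?Dh z] \<open>f z \<noteq> 0\<close> \<open>g z \<noteq> 0\<close> by simp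
  then have "sphere_critical_point (\<lambda>w. ?h w / complex_of_real (cmod (?h w))) z
      \<longleftrightarrow> (\<forall>v. inner z v = 0 \<longrightarrow> inner (\<i> *s grad_log_quot f g z) v = 0)"
    using \<open>f z \<noteq> 0\<close> \<open>g z \<noteq> 0\<close> by (intro sphere_critical_point_iff) auto
  also have "\<dots> \<longleftrightarrow> (\<exists>r::real. \<i> *s grad_log_quot f g z = complex_of_real r *s z)"
    using orthogonal_perp_iff_scaleR[OF \<open>z \<noteq> 0\<close>]
    by (simp add: scaleR_eq_of_real_vector_scalar_mult)
  finally show ?thesis .
qed

theorem lemma2p2:
  fixes f g :: "complex^'n \<Rightarrow> complex" and U :: "(complex^'n) set"
  assumes "open U" and "0 \<in> U"
    and "cn_holomorphic_on f U" and "cn_holomorphic_on g U"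
    and "f 0 = 0" and "g 0 = 0"
  shows "\<exists>\<epsilon>0>0. \<forall>\<epsilon>. 0 < \<epsilon> \<and> \<epsilon> < \<epsilon>0 \<longrightarrow>
           (\<forall>z \<in> sphere 0 \<epsilon>. f z \<noteq> 0 \<and> g z \<noteq> 0 \<longrightarrow>
              (sphere_critical_point (\<lambda>w. (f w / g w) / complex_of_real (cmod (f w / g w))) z
               \<longleftrightarrow> (\<exists>r::real. \<i> *s grad_log_quot f g z = complex_of_real r *s z)))"
proof -
  obtain e where "e > 0" and ball_U: "ball 0 e \<subseteq> U"
    using assms(1,2) open_contains_ball by blast
  have pointwise: "sphere_critical_point (\<lambda>w. (f w / g w) / complex_of_real (cmod (f w / g w))) z
      \<longleftrightarrow> (\<exists>r::real. \<i> *s grad_log_quot f g z = complex_of_real r *s z)"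
    if "z \<in> sphere 0 \<epsilon>" "0 < \<epsilon> \<and> \<epsilon> < e" "f z \<noteq> 0 \<and> g z \<noteq> 0" for \<epsilon> z
  proof -
    have "z \<in> U" "z \<noteq> 0"
      using that ball_U by (auto simp: subset_iff)
    obtain Df where f': "(f has_derivative Df) (at z)" "\<forall>c v. Df (c *s v) = c * Df v"
      using assms(3) \<open>z \<in> U\<close> unfolding cn_holomorphic_on_def by blast
    obtain Dg where g': "(g has_derivative Dg) (at z)" "\<forall>c v. Dg (c *s v) = c * Dg v"
      using assms(4) \<open>z \<in> U\<close> unfolding cn_holomorphic_on_def by blast
    show ?thesis
      using sphere_critical_point_sgn_quotient_iff[OF f' g'] \<open>z \<noteq> 0\<close> that(3) by blast
  qed
  show ?thesis
  proof (intro exI[of _ e] conjI allI impI ballI)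
    show "e > 0" by fact
  qed (rule pointwise)
qed

end
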